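(* Let $n\ge1$ and let $\alpha=(\alpha_t)_{t\ge2},\beta=(\beta_t)_{t\ge2},\gamma=(\gamma_t)_{t\ge2},\delta=(\delta_t)_{t\ge2}$ be sequences of nonnegative integers. The number of Type OC permutations $\sigma\in\mathfrak S_n$ with $\mathrm{nu}_t(\sigma)=\alpha_t$, $\mathrm{cu}_t(\sigma)=\beta_t$, $\mathrm{nl}_t(\sigma)=\gamma_t$, $\mathrm{cl}_t(\sigma)=\delta_t$ for all $t\ge2$ equals the number of Type OC permutations $\sigma\in\mathfrak S_n$ with $\mathrm{nu}_t(\sigma)=\beta_t$, $\mathrm{cu}_t(\sigma)=\alpha_t$, $\mathrm{nl}_t(\sigma)=\delta_t$, $\mathrm{cl}_t(\sigma)=\gamma_t$ for all $t\ge2$. That is, the label $(\mathrm{nu}_2,\dots;\mathrm{cu}_2,\dots;\mathrm{nl}_2,\dots;\mathrm{cl}_2,\dots)$ and the label $(\mathrm{cu}_2,\dots;\mathrm{nu}_2,\dots;\mathrm{cl}_2,\dots;\mathrm{nl}_2,\dots)$ are equidistributed over Type OC permutations of $[n]$.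
   Context: For $\sigma\in\mathfrak S_n$: the upper arcs of $\sigma$ are the pairs $(a,\sigma(a))$ with $a\le\sigma(a)$ (a fixed point gives a loop $(a,a)$); the lower arcs are the pairs $(\sigma(a),a)$ with $\sigma(a)<a$. An element $x\in[n]$ is an upper opener if $x\le\sigma(x)$, an upper closer if $\sigma^{-1}(x)\le x$, a lower opener if $\sigma^{-1}(x)>x$, and a lower closer if $\sigma(x)<x$. For $t\ge2$: an upper $t$-crossing (enhanced) is a set of $t$ upper arcs $(a_1,b_1),\dots,(a_t,b_t)$ with $a_1<\dots<a_t\le b_1<b_2<\dots<b_t$; an upper $t$-nesting (enhanced) is a set of $t$ upper arcs with $a_1<\dots<a_t\le b_t<b_{t-1}<\dots<b_1$; a lower $t$-crossing is a set of $t$ lower arcs $(c_1,d_1),\dots,(c_t,d_t)$ with $c_1<\dots<c_t<d_1<\dots<d_t$; a lower $t$-nesting is a set of $t$ lower arcs with $c_1<\dots<c_t<d_t<\dots<d_1$. Let $\mathrm{nu}_t(\sigma),\mathrm{cu}_t(\sigma),\mathrm{nl}_t(\sigma),\mathrm{cl}_t(\sigma)$ be the numbers of upper $t$-nestings, upper $t$-crossings, lower $t$-nestings and lower $t$-crossings of $\sigma$. $\sigma$ is of Type OC if there are integers $0=s_0<s_1<\dots<s_r=n$ such that each interval $I=[s_{q-1}+1,s_q]$ satisfies $\sigma(I)=I$ and: (a) every lower opener in $I$ is strictly smaller than every lower closer in $I$ (in particular no element is both); (b) there are no $x<y$ in $I$ with $x$ an upper closer and $y$ an upper opener. *)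

theory Defs
  imports "HOL-Combinatorics.Permutations"
begin

text \<open>Permutations of [n] = {1..n} are functions sigma :: nat => nat with sigma permutes {1..n}.\<close>

definition upper_arcs :: "nat \<Rightarrow> (nat \<Rightarrow> nat) \<Rightarrow> (nat \<times> nat) set" where
  "upper_arcs n \<sigma> = {(a, \<sigma> a) | a. a \<in> {1..n} \<and> a \<le> \<sigma> a}"

definition lower_arcs :: "nat \<Rightarrow> (nat \<Rightarrow> nat) \<Rightarrow> (nat \<times> nat) set" where
  "lower_arcs n \<sigma> = {(\<sigma> a, a) | a. a \<in> {1..n} \<and> \<sigma> a < a}"

definition upper_opener :: "(nat \<Rightarrow> nat) \<Rightarrow> nat \<Rightarrow> bool" where
  "upper_opener \<sigma> x \<longleftrightarrow> x \<le> \<sigma> x"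
definition upper_closer :: "(nat \<Rightarrow> nat) \<Rightarrow> nat \<Rightarrow> bool" where
  "upper_closer \<sigma> x \<longleftrightarrow> inv \<sigma> x \<le> x"
definition lower_opener :: "(nat \<Rightarrow> nat) \<Rightarrow> nat \<Rightarrow> bool" where
  "lower_opener \<sigma> x \<longleftrightarrow> inv \<sigma> x > x"
definition lower_closer :: "(nat \<Rightarrow> nat) \<Rightarrow> nat \<Rightarrow> bool" where
  "lower_closer \<sigma> x \<longleftrightarrow> \<sigma> x < x"

definition is_pattern ::
  "((nat \<Rightarrow> nat) \<Rightarrow> (nat \<Rightarrow> nat) \<Rightarrow> bool) \<Rightarrow> nat \<Rightarrow> (nat \<times> nat) set \<Rightarrow> bool" where
  "is_pattern P t S \<longleftrightarrow> card S = t \<and>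
     (\<exists>a b. S = (\<lambda>i. (a i, b i)) ` {1..t} \<and> P a b)"

definition up_cross_shape :: "nat \<Rightarrow> (nat \<Rightarrow> nat) \<Rightarrow> (nat \<Rightarrow> nat) \<Rightarrow> bool" where
  "up_cross_shape t a b \<longleftrightarrow> (\<forall>i\<in>{1..<t}. a i < a (i+1) \<and> b i < b (i+1)) \<and> a t \<le> b 1"
definition up_nest_shape :: "nat \<Rightarrow> (nat \<Rightarrow> nat) \<Rightarrow> (nat \<Rightarrow> nat) \<Rightarrow> bool" where
  "up_nest_shape t a b \<longleftrightarrow> (\<forall>i\<in>{1..<t}. a i < a (i+1) \<and> b (i+1) < b i) \<and> a t \<le> b t"
definition low_cross_shape :: "nat \<Rightarrow> (nat \<Rightarrow> nat) \<Rightarrow> (nat \<Rightarrow> nat) \<Rightarrow> bool" where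
  "low_cross_shape t c d \<longleftrightarrow> (\<forall>i\<in>{1..<t}. c i < c (i+1) \<and> d i < d (i+1)) \<and> c t < d 1"
definition low_nest_shape :: "nat \<Rightarrow> (nat \<Rightarrow> nat) \<Rightarrow> (nat \<Rightarrow> nat) \<Rightarrow> bool" where
  "low_nest_shape t c d \<longleftrightarrow> (\<forall>i\<in>{1..<t}. c i < c (i+1) \<and> d (i+1) < d i) \<and> c t < d t"

definition nu :: "nat \<Rightarrow> nat \<Rightarrow> (nat \<Rightarrow> nat) \<Rightarrow> nat" where
  "nu n t \<sigma> = card {S. S \<subseteq> upper_arcs n \<sigma> \<and> is_pattern (up_nest_shape t) t S}"
definition cu :: "nat \<Rightarrow> nat \<Rightarrow> (nat \<Rightarrow> nat) \<Rightarrow> nat" where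
  "cu n t \<sigma> = card {S. S \<subseteq> upper_arcs n \<sigma> \<and> is_pattern (up_cross_shape t) t S}"
definition nl :: "nat \<Rightarrow> nat \<Rightarrow> (nat \<Rightarrow> nat) \<Rightarrow> nat" where
  "nl n t \<sigma> = card {S. S \<subseteq> lower_arcs n \<sigma> \<and> is_pattern (low_nest_shape t) t S}"
definition cl :: "nat \<Rightarrow> nat \<Rightarrow> (nat \<Rightarrow> nat) \<Rightarrow> nat" where
  "cl n t \<sigma> = card {S. S \<subseteq> lower_arcs n \<sigma> \<and> is_pattern (low_cross_shape t) t S}"

definition typeOC :: "nat \<Rightarrow> (nat \<Rightarrow> nat) \<Rightarrow> bool" where
  "typeOC n \<sigma> \<longleftrightarrow> (\<exists>r s. s 0 = 0 \<and> s r = n \<and> (\<forall>q<r. s q < s (Suc q)) \<and>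
     (\<forall>q\<in>{1..r}. let I = {s (q-1) + 1 .. s q} in
        \<sigma> ` I = I \<and>
        (\<forall>x\<in>I. \<forall>y\<in>I. lower_opener \<sigma> x \<and> lower_closer \<sigma> y \<longrightarrow> x < y) \<and>
        \<not> (\<exists>x\<in>I. \<exists>y\<in>I. x < y \<and> upper_closer \<sigma> x \<and> upper_opener \<sigma> y)))"

end

theory Submission
  imports Defs
begin

(* A Type OC permutation sigma cuts [n] into blocks that sigma maps onto themselves.
   Inside each block, separate the upper closers from the remaining elements (the lower
   openers) and let rho be the involution of [n] that reverses the order inside each of
   these classes (reflect below).  The map phi(sigma) = rho o sigma (flip below)
   - sends every upper arc (a, b) to (a, rho b) and every lower arc (c, d) to (rho c, d);
     conditions (a) and (b) of Type OC guarantee that the arc types are preserved;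
   - yields again a Type OC permutation with the same blocks, openers and closers, hence
     with the same rho, so phi is an involution on Type OC permutations;
   - turns upper t-crossings into upper t-nestings and conversely, because the right ends
     of such a pattern are upper closers of one block and rho reverses their order;
     likewise for lower patterns, whose left ends are lower openers of one block. *)

lemma card_eq_by_involution:
  assumes invol: "\<And>x. x \<in> A \<union> B \<Longrightarrow> f (f x) = x"
    and AB: "f ` A \<subseteq> B" and BA: "f ` B \<subseteq> A"
  shows "card A = card B"
proof -
  have "B \<subseteq> f ` A"
  proof
    fix y assume "y \<in> B"
    then have "f y \<in> A" "f (f y) = y" using BA invol by auto
    then show "y \<in> f ` A" by (metis imageI)
  qed
  then have "f ` A = B" using AB by blast
  moreover have "inj_on f A" by (rule inj_on_inverseI[where g = f]) (use invol in blast)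
  ultimately show ?thesis by (metis card_image)
qed

definition rank :: "nat set \<Rightarrow> nat \<Rightarrow> nat" where
  "rank A x = card {z\<in>A. z < x}"

definition mirror :: "nat set \<Rightarrow> nat \<Rightarrow> nat" where
  "mirror A x = (THE y. y \<in> A \<and> rank A y = card A - Suc (rank A x))"

lemma rank_strict_mono:
  assumes "finite A" "x \<in> A" "y \<in> A" "x < y" shows "rank A x < rank A y"
proof -
  have "{z\<in>A. z < x} \<subset> {z\<in>A. z < y}" using assms by auto
  then show ?thesis unfolding rank_def using assms(1) by (simp add: psubset_card_mono)
qed

lemma rank_less_card:
  assumes "finite A" "x \<in> A" shows "rank A x < card A"
proof -
  have "{z\<in>A. z < x} \<subset> A" using assms by auto
  then show ?thesis unfolding rank_def using assms(1) by (simp add: psubset_card_mono)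
qed

lemma rank_inj: assumes "finite A" shows "inj_on (rank A) A"
proof (rule inj_onI)
  fix x y assume "x \<in> A" "y \<in> A" "rank A x = rank A y"
  then show "x = y" using rank_strict_mono[OF assms, of x y] rank_strict_mono[OF assms, of y x]
    by (metis less_irrefl linorder_neqE_nat)
qed

lemma rank_ex1:
  assumes "finite A" "k < card A" shows "\<exists>!y. y \<in> A \<and> rank A y = k"
proof -
  have "rank A ` A \<subseteq> {..<card A}" using rank_less_card[OF assms(1)] by auto
  moreover have "card (rank A ` A) = card {..<card A}"
    using card_image[OF rank_inj[OF assms(1)]] by simp
  ultimately have "rank A ` A = {..<card A}" by (simp add: card_subset_eq)
  then obtain y where "y \<in> A" "rank A y = k" using assms(2) by (metis imageE lessThan_iff)
  moreover have "z = y" if "z \<in> A \<and> rank A z = k" for z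
    using rank_inj[OF assms(1)] calculation that by (auto dest: inj_onD)
  ultimately show ?thesis by blast
qed

lemma mirror_prop:
  assumes "finite A" "x \<in> A"
  shows "mirror A x \<in> A \<and> rank A (mirror A x) = card A - Suc (rank A x)"
proof -
  have "card A - Suc (rank A x) < card A" using rank_less_card[OF assms] by simp
  from theI'[OF rank_ex1[OF assms(1) this]] show ?thesis unfolding mirror_def by simp
qed

lemma mirror_mirror:
  assumes "finite A" "x \<in> A" shows "mirror A (mirror A x) = x"
proof -
  have m: "mirror A x \<in> A" using mirror_prop[OF assms] by simp
  have "rank A (mirror A (mirror A x)) = rank A x"
    using mirror_prop[OF assms(1) m] mirror_prop[OF assms] rank_less_card[OF assms] by simp
  then show ?thesis using mirror_prop[OF assms(1) m] assms rank_inj[OF assms(1)]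
    by (auto dest: inj_onD)
qed

lemma mirror_antimono:
  assumes "finite A" "x \<in> A" "y \<in> A" "x < y" shows "mirror A y < mirror A x"
proof (rule ccontr)
  assume "\<not> ?thesis"
  then have "rank A (mirror A x) \<le> rank A (mirror A y)"
    using rank_strict_mono[OF assms(1)] mirror_prop[OF assms(1,2)] mirror_prop[OF assms(1,3)]
    by (metis le_eq_less_or_eq not_less)
  moreover have "rank A x < rank A y" using rank_strict_mono assms by blast
  ultimately show False
    using mirror_prop[OF assms(1,2)] mirror_prop[OF assms(1,3)] rank_less_card[OF assms(1,3)]
    by simp
qed

(* x and y lie in the same block of sigma: no initial segment {1..k} that sigma maps onto
   itself separates them.  This describes the finest block decomposition intrinsically. *)
definition same_block :: "(nat \<Rightarrow> nat) \<Rightarrow> nat \<Rightarrow> nat \<Rightarrow> bool" where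
  "same_block \<sigma> x y \<longleftrightarrow> (\<forall>k. \<sigma> ` {1..k} = {1..k} \<longrightarrow> (k < x \<longleftrightarrow> k < y))"

lemma same_block_refl: "same_block \<sigma> x x"
  by (simp add: same_block_def)
lemma same_block_sym: "same_block \<sigma> x y \<Longrightarrow> same_block \<sigma> y x"
  by (simp add: same_block_def)
lemma same_block_trans: "same_block \<sigma> x y \<Longrightarrow> same_block \<sigma> y z \<Longrightarrow> same_block \<sigma> x z"
  by (simp add: same_block_def)

lemma same_block_common: "same_block \<sigma> z x \<Longrightarrow> same_block \<sigma> z y \<Longrightarrow> same_block \<sigma> x y"
  by (simp add: same_block_def)

lemma same_block_between:
  "same_block \<sigma> x z \<Longrightarrow> x \<le> y \<Longrightarrow> y \<le> z \<Longrightarrow> same_block \<sigma> x y"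
  unfolding same_block_def by (meson le_less_trans less_le_trans)

lemma same_block_image:
  assumes "\<sigma> permutes {1..n}" "x \<ge> 1" shows "same_block \<sigma> x (\<sigma> x)"
  unfolding same_block_def
proof (intro allI impI)
  fix k assume fixed: "\<sigma> ` {1..k} = {1..k}"
  have "x \<in> {1..k} \<longleftrightarrow> \<sigma> x \<in> \<sigma> ` {1..k}"
    using permutes_inj[OF assms(1)] by (simp add: inj_image_mem_iff)
  moreover have "\<sigma> x \<noteq> 0"
    using assms permutes_not_in[OF assms(1), of 0] permutes_inj[OF assms(1)]
    by (metis atLeastAtMost_iff injD not_one_le_zero)
  ultimately show "k < x \<longleftrightarrow> k < \<sigma> x" using fixed assms(2) by auto
qed

definition closer_class :: "nat \<Rightarrow> (nat \<Rightarrow> nat) \<Rightarrow> nat \<Rightarrow> nat set" where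
  "closer_class n \<sigma> x =
     {y\<in>{1..n}. same_block \<sigma> x y \<and> (upper_closer \<sigma> y \<longleftrightarrow> upper_closer \<sigma> x)}"

definition reflect :: "nat \<Rightarrow> (nat \<Rightarrow> nat) \<Rightarrow> nat \<Rightarrow> nat" where
  "reflect n \<sigma> x = (if x \<in> {1..n} then mirror (closer_class n \<sigma> x) x else x)"

definition flip :: "nat \<Rightarrow> (nat \<Rightarrow> nat) \<Rightarrow> nat \<Rightarrow> nat" where
  "flip n \<sigma> = reflect n \<sigma> \<circ> \<sigma>"

lemma closer_class_eq:
  assumes "same_block \<sigma> x x'" "upper_closer \<sigma> x' \<longleftrightarrow> upper_closer \<sigma> x"
  shows "closer_class n \<sigma> x' = closer_class n \<sigma> x"
  unfolding closer_class_def using assms same_block_trans same_block_sym by blast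

lemma reflect_outside: "x \<notin> {1..n} \<Longrightarrow> reflect n \<sigma> x = x"
  unfolding reflect_def by (simp only: if_False)

lemma reflect_in_class:
  assumes "x \<in> {1..n}"
  shows "reflect n \<sigma> x \<in> {1..n} \<and> same_block \<sigma> x (reflect n \<sigma> x) \<and>
         (upper_closer \<sigma> (reflect n \<sigma> x) \<longleftrightarrow> upper_closer \<sigma> x)"
proof -
  have "x \<in> closer_class n \<sigma> x" using assms same_block_refl by (auto simp: closer_class_def)
  then have "mirror (closer_class n \<sigma> x) x \<in> closer_class n \<sigma> x"
    using mirror_prop[of "closer_class n \<sigma> x" x] by (auto simp: closer_class_def)
  then show ?thesis using assms by (simp add: reflect_def closer_class_def)
qed

lemma reflect_reflect: "reflect n \<sigma> (reflect n \<sigma> x) = x"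
proof (cases "x \<in> {1..n}")
  case True
  note r = reflect_in_class[OF True]
  have "reflect n \<sigma> (reflect n \<sigma> x) = mirror (closer_class n \<sigma> x) (reflect n \<sigma> x)"
    using r closer_class_eq[of \<sigma> x "reflect n \<sigma> x" n] by (simp add: reflect_def)
  also have "\<dots> = x" using True
    by (simp add: reflect_def mirror_mirror closer_class_def same_block_refl)
  finally show ?thesis .
qed (simp add: reflect_outside)

lemma reflect_antimono:
  assumes "x \<in> {1..n}" "y \<in> {1..n}" "same_block \<sigma> x y"
    "upper_closer \<sigma> y \<longleftrightarrow> upper_closer \<sigma> x" "x < y"
  shows "reflect n \<sigma> y < reflect n \<sigma> x"
proof -
  have "reflect n \<sigma> y = mirror (closer_class n \<sigma> x) y"
    using assms closer_class_eq[OF assms(3,4), of n] by (simp add: reflect_def)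
  moreover have "reflect n \<sigma> x = mirror (closer_class n \<sigma> x) x"
    using assms by (simp add: reflect_def)
  ultimately show ?thesis
    using mirror_antimono[of "closer_class n \<sigma> x" x y] assms same_block_refl
    by (auto simp: closer_class_def)
qed

lemma reflect_permutes: "reflect n \<sigma> permutes {1..n}"
proof (rule bij_imp_permutes)
  show "bij_betw (reflect n \<sigma>) {1..n} {1..n}"
    by (rule bij_betw_byWitness[where f' = "reflect n \<sigma>"])
       (use reflect_in_class reflect_reflect in blast)+
qed (rule reflect_outside)

lemma lower_opener_iff: "lower_opener \<sigma> x \<longleftrightarrow> \<not> upper_closer \<sigma> x"
  by (auto simp: lower_opener_def upper_closer_def)
lemma lower_closer_iff: "lower_closer \<sigma> x \<longleftrightarrow> \<not> upper_opener \<sigma> x"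
  by (auto simp: lower_closer_def upper_opener_def)

locale OC_blocks =
  fixes n :: nat and \<sigma> :: "nat \<Rightarrow> nat" and r :: nat and s :: "nat \<Rightarrow> nat"
  assumes perm: "\<sigma> permutes {1..n}" and s0: "s 0 = 0" and sr: "s r = n"
    and smono: "\<forall>q<r. s q < s (Suc q)"
    and blocks: "\<forall>q\<in>{1..r}. let I = {s (q-1) + 1 .. s q} in
        \<sigma> ` I = I \<and>
        (\<forall>x\<in>I. \<forall>y\<in>I. lower_opener \<sigma> x \<and> lower_closer \<sigma> y \<longrightarrow> x < y) \<and>
        \<not> (\<exists>x\<in>I. \<exists>y\<in>I. x < y \<and> upper_closer \<sigma> x \<and> upper_opener \<sigma> y)"

lemma typeOC_imp_OC_blocks:
  "typeOC n \<sigma> \<Longrightarrow> \<sigma> permutes {1..n} \<Longrightarrow> \<exists>r s. OC_blocks n \<sigma> r s"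
  unfolding typeOC_def OC_blocks_def by blast

lemma OC_blocks_imp_typeOC: "OC_blocks n \<sigma> r s \<Longrightarrow> typeOC n \<sigma>"
  unfolding typeOC_def OC_blocks_def by blast

context OC_blocks begin

abbreviation block :: "nat \<Rightarrow> nat set" where
  "block q \<equiv> {s (q-1) + 1 .. s q}"

lemma block_invariant: "q \<in> {1..r} \<Longrightarrow> \<sigma> ` block q = block q"
  using blocks unfolding Let_def by blast

lemma block_lower_order:
  "q \<in> {1..r} \<Longrightarrow> x \<in> block q \<Longrightarrow> y \<in> block q
   \<Longrightarrow> lower_opener \<sigma> x \<Longrightarrow> lower_closer \<sigma> y \<Longrightarrow> x < y"
  using blocks unfolding Let_def by blast

lemma block_upper_order:
  "q \<in> {1..r} \<Longrightarrow> x \<in> block q \<Longrightarrow> y \<in> block q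
   \<Longrightarrow> upper_closer \<sigma> x \<Longrightarrow> upper_opener \<sigma> y \<Longrightarrow> y \<le> x"
  using blocks unfolding Let_def by (meson not_le)

lemma prefix_invariant: "q \<le> r \<Longrightarrow> \<sigma> ` {1..s q} = {1..s q}"
proof (induction q)
  case 0 then show ?case using s0 by simp
next
  case (Suc q)
  have "s q < s (Suc q)" using smono Suc by simp
  then have "{1..s (Suc q)} = {1..s q} \<union> block (Suc q)" by auto
  then show ?case using Suc block_invariant[of "Suc q"] by (simp add: image_Un)
qed

lemma block_exists: assumes "x \<in> {1..n}" shows "\<exists>q\<in>{1..r}. x \<in> block q"
proof -
  define q where "q = (LEAST q. x \<le> s q)"
  have ex: "x \<le> s r" using assms sr by simp
  have above: "x \<le> s q" unfolding q_def by (rule LeastI[of _ r]) (rule ex)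
  have "q \<le> r" unfolding q_def by (rule Least_le) (rule ex)
  moreover have "q \<noteq> 0"
  proof
    assume "q = 0"
    then show False using above s0 assms by simp
  qed
  moreover have "\<not> x \<le> s (q-1)"
    unfolding q_def by (rule not_less_Least) (use \<open>q \<noteq> 0\<close> q_def in simp)
  ultimately show ?thesis using above by (intro bexI[of _ q]) auto
qed

lemma s_mono: "q \<le> q' \<Longrightarrow> q' \<le> r \<Longrightarrow> s q \<le> s q'"
proof (induction q' rule: dec_induct)
  case (step q')
  then show ?case using smono by (metis Suc_le_lessD le_less_trans less_imp_le_nat)
qed simp

lemma block_subset: "q \<in> {1..r} \<Longrightarrow> block q \<subseteq> {1..n}"
  using s_mono[of q r] sr by auto

(* No fixed initial segment ends strictly inside a block: its last element would be an
   upper closer followed by an upper opener, contradicting condition (b). *)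
lemma no_cut_inside_block:
  assumes q: "q \<in> {1..r}" and k: "s (q-1) < k" "k < s q"
    and cut: "\<sigma> ` {1..k} = {1..k}"
  shows False
proof -
  have kin: "k \<in> block q" and k1in: "k+1 \<in> block q" using k by auto
  have "k \<in> \<sigma> ` {1..k}" using cut k by auto
  then obtain z where z: "z \<in> {1..k}" "\<sigma> z = k" by auto
  then have "inv \<sigma> k = z" using permutes_inv_eq[OF perm] by simp
  then have "upper_closer \<sigma> k" using z by (simp add: upper_closer_def)
  moreover have "upper_opener \<sigma> (k+1)"
  proof -
    have "\<sigma> (k+1) \<notin> \<sigma> ` {1..k}"
      using permutes_inj[OF perm] by (simp add: inj_image_mem_iff)
    moreover have "\<sigma> (k+1) \<in> {1..n}"
      using permutes_in_image[OF perm] k1in block_subset[OF q] by blast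
    ultimately show ?thesis using cut by (auto simp: upper_opener_def)
  qed
  ultimately have "k + 1 \<le> k" using block_upper_order[OF q kin k1in] by blast
  then show False by simp
qed

lemma same_block_stays:
  assumes q: "q \<in> {1..r}" and x: "x \<in> block q" and sb: "same_block \<sigma> x y"
  shows "y \<in> block q"
proof -
  have "\<sigma> ` {1..s (q-1)} = {1..s (q-1)}" by (rule prefix_invariant) (use q in auto)
  moreover have "\<sigma> ` {1..s q} = {1..s q}" by (rule prefix_invariant) (use q in auto)
  ultimately have "s (q-1) < x \<longleftrightarrow> s (q-1) < y" "s q < x \<longleftrightarrow> s q < y"
    using sb unfolding same_block_def by blast+
  then show ?thesis using x by auto
qed

lemma block_same_block:
  assumes q: "q \<in> {1..r}" and x: "x \<in> block q" and y: "y \<in> block q"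
  shows "same_block \<sigma> x y"
  unfolding same_block_def
proof (intro allI impI)
  fix k assume cut: "\<sigma> ` {1..k} = {1..k}"
  show "k < x \<longleftrightarrow> k < y"
  proof (rule ccontr)
    assume "\<not> ?thesis"
    then have "s (q-1) < k" "k < s q" using x y by auto
    then show False using no_cut_inside_block[OF q _ _ cut] by blast
  qed
qed

lemma lower_opener_before_closer:
  "x \<in> {1..n} \<Longrightarrow> same_block \<sigma> x y \<Longrightarrow> lower_opener \<sigma> x \<Longrightarrow> lower_closer \<sigma> y \<Longrightarrow> x < y"
  using block_exists same_block_stays block_lower_order by blast

lemma upper_opener_before_closer:
  "x \<in> {1..n} \<Longrightarrow> same_block \<sigma> x y \<Longrightarrow> upper_closer \<sigma> x \<Longrightarrow> upper_opener \<sigma> y \<Longrightarrow> y \<le> x"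
  using block_exists same_block_stays block_upper_order by blast

lemma same_block_arc: "x \<in> {1..n} \<Longrightarrow> same_block \<sigma> x (\<sigma> x)"
  using same_block_image[OF perm] by simp

lemma flip_permutes: "flip n \<sigma> permutes {1..n}"
  unfolding flip_def by (rule permutes_compose[OF perm reflect_permutes])

(* phi keeps the upper openers: the new right end reflect (sigma x) stays on the same side
   of x, by condition (b) for upper arcs and condition (a) for lower arcs. *)
lemma flip_upper_opener_iff: "x \<le> flip n \<sigma> x \<longleftrightarrow> x \<le> \<sigma> x"
proof (cases "x \<in> {1..n}")
  case False
  then show ?thesis using permutes_not_in[OF perm] by (simp add: flip_def reflect_outside)
next
  case x: True
  have sx: "\<sigma> x \<in> {1..n}" using x permutes_in_image[OF perm] by simp
  have inv: "inv \<sigma> (\<sigma> x) = x" using permutes_inverses[OF perm] by simp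
  note r = reflect_in_class[OF sx, of \<sigma>]
  have sb: "same_block \<sigma> (reflect n \<sigma> (\<sigma> x)) x"
    using same_block_arc[OF x] r same_block_trans same_block_sym by blast
  show ?thesis
  proof (cases "x \<le> \<sigma> x")
    case True
    then have "upper_closer \<sigma> (reflect n \<sigma> (\<sigma> x))" using r inv by (simp add: upper_closer_def)
    then have "x \<le> reflect n \<sigma> (\<sigma> x)"
      using upper_opener_before_closer[OF conjunct1[OF r] sb] True by (simp add: upper_opener_def)
    then show ?thesis using True by (simp add: flip_def)
  next
    case False
    then have "lower_opener \<sigma> (reflect n \<sigma> (\<sigma> x))"
      using r inv by (simp add: lower_opener_iff upper_closer_def)
    then have "reflect n \<sigma> (\<sigma> x) < x"
      using lower_opener_before_closer[OF conjunct1[OF r] sb] False by (simp add: lower_closer_def)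
    then show ?thesis using False by (simp add: flip_def)
  qed
qed

lemma flip_upper_opener: "upper_opener (flip n \<sigma>) x \<longleftrightarrow> upper_opener \<sigma> x"
  using flip_upper_opener_iff by (simp add: upper_opener_def)

lemma flip_upper_closer: "upper_closer (flip n \<sigma>) y \<longleftrightarrow> upper_closer \<sigma> y"
proof -
  define x where "x = inv (flip n \<sigma>) y"
  have fx: "flip n \<sigma> x = y" unfolding x_def using permutes_inverses[OF flip_permutes] by simp
  show ?thesis
  proof (cases "y \<in> {1..n}")
    case False
    then have "x = y" using fx permutes_not_in[OF flip_permutes] permutes_in_image[OF flip_permutes]
      by metis
    moreover have "inv \<sigma> y = y" using False permutes_not_in[OF perm] permutes_inv_eq[OF perm] by metis
    ultimately show ?thesis unfolding upper_closer_def x_def[symmetric] by simp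
  next
    case True
    have sx: "\<sigma> x = reflect n \<sigma> y" using fx reflect_reflect by (metis comp_apply flip_def)
    have "upper_closer \<sigma> y \<longleftrightarrow> upper_closer \<sigma> (reflect n \<sigma> y)" using reflect_in_class[OF True] by simp
    also have "\<dots> \<longleftrightarrow> x \<le> \<sigma> x"
      unfolding upper_closer_def sx[symmetric] using permutes_inverses[OF perm] by simp
    also have "\<dots> \<longleftrightarrow> upper_closer (flip n \<sigma>) y"
      unfolding upper_closer_def x_def[symmetric] by (metis fx flip_upper_opener_iff)
    finally show ?thesis by simp
  qed
qed

(* rho maps every block onto itself, since it preserves same_block. *)
lemma reflect_block:
  assumes q: "q \<in> {1..r}" shows "reflect n \<sigma> ` block q = block q"
proof -
  have sub: "reflect n \<sigma> ` block q \<subseteq> block q"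
  proof
    fix y assume "y \<in> reflect n \<sigma> ` block q"
    then obtain x where x: "x \<in> block q" "y = reflect n \<sigma> x" by blast
    then have "same_block \<sigma> x y" using reflect_in_class block_subset[OF q] by blast
    then show "y \<in> block q" using same_block_stays[OF q x(1)] by blast
  qed
  moreover have "block q \<subseteq> reflect n \<sigma> ` block q"
    using image_mono[OF sub, of "reflect n \<sigma>"] by (simp add: image_image reflect_reflect)
  ultimately show ?thesis by (rule subset_antisym)
qed

(* Since rho fixes every block setwise, phi has the same blocks, and it satisfies (a)
   and (b) because openers and closers are unchanged. *)
lemma OC_blocks_flip: "OC_blocks n (flip n \<sigma>) r s"
proof -
  have blk: "flip n \<sigma> ` block q = block q
     \<and> (\<forall>x\<in>block q. \<forall>y\<in>block q. lower_opener (flip n \<sigma>) x \<and> lower_closer (flip n \<sigma>) y \<longrightarrow> x < y)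
     \<and> \<not> (\<exists>x\<in>block q. \<exists>y\<in>block q. x < y \<and> upper_closer (flip n \<sigma>) x \<and> upper_opener (flip n \<sigma>) y)"
    if q: "q \<in> {1..r}" for q
  proof (intro conjI)
    have "flip n \<sigma> ` block q = reflect n \<sigma> ` (\<sigma> ` block q)"
      by (simp add: flip_def image_comp)
    then show "flip n \<sigma> ` block q = block q" using block_invariant[OF q] reflect_block[OF q] by simp
    show "\<forall>x\<in>block q. \<forall>y\<in>block q. lower_opener (flip n \<sigma>) x \<and> lower_closer (flip n \<sigma>) y \<longrightarrow> x < y"
    proof (intro ballI impI)
      fix x y assume xy: "x \<in> block q" "y \<in> block q"
        and "lower_opener (flip n \<sigma>) x \<and> lower_closer (flip n \<sigma>) y"
      then have "lower_opener \<sigma> x" "lower_closer \<sigma> y"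
        by (simp_all add: lower_opener_iff lower_closer_iff flip_upper_closer flip_upper_opener)
      then show "x < y" using block_lower_order[OF q xy] by blast
    qed
    show "\<not> (\<exists>x\<in>block q. \<exists>y\<in>block q. x < y \<and> upper_closer (flip n \<sigma>) x \<and> upper_opener (flip n \<sigma>) y)"
      using block_upper_order[OF q] leD unfolding flip_upper_closer flip_upper_opener by blast
  qed
  then show ?thesis unfolding OC_blocks_def Let_def
    using flip_permutes s0 sr smono by blast
qed

end

context OC_blocks begin

(* phi has the same blocks and closer classes as sigma, hence the same reflection. *)
lemma reflect_flip: "reflect n (flip n \<sigma>) = reflect n \<sigma>"
proof -
  interpret F: OC_blocks n "flip n \<sigma>" r s by (rule OC_blocks_flip)
  have same: "same_block (flip n \<sigma>) x y \<longleftrightarrow> same_block \<sigma> x y" if x: "x \<in> {1..n}" for x y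
  proof -
    obtain q where q: "q \<in> {1..r}" "x \<in> block q" using block_exists[OF x] by blast
    show ?thesis
      using F.same_block_stays[OF q] same_block_stays[OF q]
        F.block_same_block[OF q] block_same_block[OF q] by blast
  qed
  have "closer_class n (flip n \<sigma>) x = closer_class n \<sigma> x" if "x \<in> {1..n}" for x
    using same[OF that] by (simp add: closer_class_def flip_upper_closer)
  then show ?thesis by (simp add: reflect_def fun_eq_iff)
qed

lemma flip_flip: "flip n (flip n \<sigma>) = \<sigma>"
  unfolding flip_def[of n "flip n \<sigma>"] reflect_flip by (simp add: flip_def fun_eq_iff reflect_reflect)

end

lemma upper_arcs_image: "upper_arcs n \<sigma> = (\<lambda>a. (a, \<sigma> a)) ` {a\<in>{1..n}. a \<le> \<sigma> a}"
  by (auto simp: upper_arcs_def)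

lemma lower_arcs_image: "lower_arcs n \<sigma> = (\<lambda>a. (\<sigma> a, a)) ` {a\<in>{1..n}. \<sigma> a < a}"
  by (auto simp: lower_arcs_def)

(* On arcs, phi acts by reflecting the right end of upper arcs and the left end of lower
   arcs; both maps are involutions of pairs. *)
definition reflect_right :: "nat \<Rightarrow> (nat \<Rightarrow> nat) \<Rightarrow> nat \<times> nat \<Rightarrow> nat \<times> nat" where
  "reflect_right n \<sigma> p = (fst p, reflect n \<sigma> (snd p))"

definition reflect_left :: "nat \<Rightarrow> (nat \<Rightarrow> nat) \<Rightarrow> nat \<times> nat \<Rightarrow> nat \<times> nat" where
  "reflect_left n \<sigma> p = (reflect n \<sigma> (fst p), snd p)"

lemma reflect_right_involution: "reflect_right n \<sigma> (reflect_right n \<sigma> p) = p"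
  by (simp add: reflect_right_def reflect_reflect)

lemma reflect_left_involution: "reflect_left n \<sigma> (reflect_left n \<sigma> p) = p"
  by (simp add: reflect_left_def reflect_reflect)

lemma reflect_right_inj: "inj (reflect_right n \<sigma>)"
  by (metis injI reflect_right_involution)

lemma reflect_left_inj: "inj (reflect_left n \<sigma>)"
  by (metis injI reflect_left_involution)

context OC_blocks begin

lemma upper_arcs_flip: "upper_arcs n (flip n \<sigma>) = reflect_right n \<sigma> ` upper_arcs n \<sigma>"
proof -
  have "upper_arcs n (flip n \<sigma>) = (\<lambda>a. (a, flip n \<sigma> a)) ` {a\<in>{1..n}. a \<le> \<sigma> a}"
    by (simp add: upper_arcs_image flip_upper_opener_iff)
  also have "\<dots> = reflect_right n \<sigma> ` upper_arcs n \<sigma>"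
    by (simp add: upper_arcs_image image_image reflect_right_def flip_def)
  finally show ?thesis .
qed

lemma lower_arcs_flip: "lower_arcs n (flip n \<sigma>) = reflect_left n \<sigma> ` lower_arcs n \<sigma>"
proof -
  have "lower_arcs n (flip n \<sigma>) = (\<lambda>a. (flip n \<sigma> a, a)) ` {a\<in>{1..n}. \<sigma> a < a}"
    by (simp add: lower_arcs_image flip_upper_opener_iff flip_upper_opener_iff[THEN Not_eq_iff[THEN iffD2], unfolded not_le])
  also have "\<dots> = reflect_left n \<sigma> ` lower_arcs n \<sigma>"
    by (simp add: lower_arcs_image image_image reflect_left_def flip_def)
  finally show ?thesis .
qed

end

lemma chain_increasing:
  assumes "\<forall>i\<in>{1..<t}. (a :: nat \<Rightarrow> nat) i < a (i+1)" "1 \<le> i" "i \<le> j" "j \<le> t"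
  shows "a i \<le> a j"
  using assms(3,4)
proof (induction j rule: dec_induct)
  case (step j)
  then show ?case using assms(1,2) by (metis Suc_eq_plus1 Suc_le_lessD atLeastLessThan_iff
        le_trans less_imp_le_nat order.strict_trans2)
qed simp

lemma chain_decreasing:
  assumes "\<forall>i\<in>{1..<t}. (a :: nat \<Rightarrow> nat) (i+1) < a i" "1 \<le> i" "i \<le> j" "j \<le> t"
  shows "a j \<le> a i"
  using assms(3,4)
proof (induction j rule: dec_induct)
  case (step j)
  then show ?case using assms(1,2) by (metis Suc_eq_plus1 Suc_le_lessD atLeastLessThan_iff
        le_trans less_imp_le_nat order.strict_trans2)
qed simp

lemma reverse_index_image: "(\<lambda>i. t + 1 - i) ` {1..(t::nat)} = {1..t}"
proof
  show "{1..t} \<subseteq> (\<lambda>i. t + 1 - i) ` {1..t}"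
  proof
    fix j assume "j \<in> {1..t}"
    then show "j \<in> (\<lambda>i. t + 1 - i) ` {1..t}" by (intro image_eqI[where x = "t+1-j"]) auto
  qed
qed auto

lemma is_pattern_image:
  assumes "inj f" "card S = t" "f ` S = (\<lambda>i. (a i, b i)) ` {1..t}" "P a b"
  shows "is_pattern P t (f ` S)"
proof -
  have "card (f ` S) = card S" by (rule card_image[OF inj_on_subset[OF assms(1) subset_UNIV]])
  then show ?thesis unfolding is_pattern_def using assms(2-4) by blast
qed

context OC_blocks begin

lemma upper_pattern_in_block:
  fixes a b :: "nat \<Rightarrow> nat" and t :: nat
  assumes sub: "S \<subseteq> upper_arcs n \<sigma>" and S: "S = (\<lambda>i. (a i, b i)) ` {1..t}"
    and ca: "\<forall>i\<in>{1..<t}. a i < a (i+1)" and ab: "a t \<le> b 1" and i: "i \<in> {1..t}"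
  shows "b i \<in> {1..n} \<and> upper_opener \<sigma> (a i) \<and> upper_closer \<sigma> (b i) \<and>
         same_block \<sigma> (a 1) (a i) \<and> same_block \<sigma> (a 1) (b i)"
proof -
  have arc: "a j \<in> {1..n} \<and> b j = \<sigma> (a j) \<and> a j \<le> b j" if "j \<in> {1..t}" for j
  proof -
    have "(a j, b j) \<in> upper_arcs n \<sigma>" using sub S that by blast
    then show ?thesis by (auto simp: upper_arcs_image)
  qed
  have t1: "1 \<in> {1..t}" using i by auto
  have "a 1 \<le> a i" "a i \<le> a t"
    using chain_increasing[OF ca, of 1 i] chain_increasing[OF ca, of i t] i by auto
  then have first: "same_block \<sigma> (a 1) (a i)"
    using same_block_between[OF same_block_arc] arc[OF t1] ab by (metis le_trans)
  then have "same_block \<sigma> (a 1) (b i)"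
    using same_block_arc arc[OF i] same_block_trans by metis
  moreover have "upper_closer \<sigma> (b i)"
    using arc[OF i] permutes_inverses[OF perm] by (simp add: upper_closer_def)
  moreover have "b i \<in> {1..n}" using arc[OF i] permutes_in_image[OF perm] by metis
  ultimately show ?thesis using first arc[OF i] by (simp add: upper_opener_def)
qed

(* Reflection reverses the right ends of an upper pattern and keeps them after the left
   ends, so it exchanges upper crossings and upper nestings. *)
lemma upper_crossing_to_nesting:
  assumes sub: "S \<subseteq> upper_arcs n \<sigma>" and t: "t \<ge> 1" and pat: "is_pattern (up_cross_shape t) t S"
  shows "is_pattern (up_nest_shape t) t (reflect_right n \<sigma> ` S)"
proof -
  obtain a b where S: "S = (\<lambda>i. (a i, b i)) ` {1..t}" and sh: "up_cross_shape t a b"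
    and card: "card S = t" using pat by (auto simp: is_pattern_def)
  have ca: "\<forall>i\<in>{1..<t}. a i < a (i+1)" and cb: "\<forall>i\<in>{1..<t}. b i < b (i+1)"
    and ab: "a t \<le> b 1" using sh by (auto simp: up_cross_shape_def)
  note U = upper_pattern_in_block[OF sub S ca ab]
  have img: "reflect_right n \<sigma> ` S = (\<lambda>i. (a i, reflect n \<sigma> (b i))) ` {1..t}"
    unfolding S image_image by (simp add: reflect_right_def)
  have "up_nest_shape t a (\<lambda>i. reflect n \<sigma> (b i))"
    unfolding up_nest_shape_def
  proof (intro conjI ballI)
    fix i assume i: "i \<in> {1..<t}"
    then have i1: "i \<in> {1..t}" "i+1 \<in> {1..t}" by auto
    show "a i < a (i+1)" using ca i by simp
    show "reflect n \<sigma> (b (i+1)) < reflect n \<sigma> (b i)"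
      using reflect_antimono U[OF i1(1)] U[OF i1(2)] same_block_common cb i by blast
  next
    have t1: "t \<in> {1..t}" using t by simp
    note r = reflect_in_class[OF conjunct1[OF U[OF t1]], of \<sigma>]
    have "same_block \<sigma> (reflect n \<sigma> (b t)) (a t)"
      using r U[OF t1] same_block_common same_block_trans by blast
    then show "a t \<le> reflect n \<sigma> (b t)"
      using upper_opener_before_closer[OF conjunct1[OF r]] r U[OF t1] by blast
  qed
  then show ?thesis by (rule is_pattern_image[OF reflect_right_inj card img])
qed

lemma upper_nesting_to_crossing:
  assumes sub: "S \<subseteq> upper_arcs n \<sigma>" and t: "t \<ge> 1" and pat: "is_pattern (up_nest_shape t) t S"
  shows "is_pattern (up_cross_shape t) t (reflect_right n \<sigma> ` S)"
proof -
  obtain a b where S: "S = (\<lambda>i. (a i, b i)) ` {1..t}" and sh: "up_nest_shape t a b"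
    and card: "card S = t" using pat by (auto simp: is_pattern_def)
  have ca: "\<forall>i\<in>{1..<t}. a i < a (i+1)" and cb: "\<forall>i\<in>{1..<t}. b (i+1) < b i"
    and ab: "a t \<le> b t" using sh by (auto simp: up_nest_shape_def)
  have "a t \<le> b 1" using ab chain_decreasing[OF cb, of 1 t] t by simp
  note U = upper_pattern_in_block[OF sub S ca this]
  have img: "reflect_right n \<sigma> ` S = (\<lambda>i. (a i, reflect n \<sigma> (b i))) ` {1..t}"
    unfolding S image_image by (simp add: reflect_right_def)
  have "up_cross_shape t a (\<lambda>i. reflect n \<sigma> (b i))"
    unfolding up_cross_shape_def
  proof (intro conjI ballI)
    fix i assume i: "i \<in> {1..<t}"
    then have i1: "i \<in> {1..t}" "i+1 \<in> {1..t}" by auto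
    show "a i < a (i+1)" using ca i by simp
    show "reflect n \<sigma> (b i) < reflect n \<sigma> (b (i+1))"
      using reflect_antimono U[OF i1(1)] U[OF i1(2)] same_block_common cb i by blast
  next
    have t1: "1 \<in> {1..t}" "t \<in> {1..t}" using t by auto
    note r = reflect_in_class[OF conjunct1[OF U[OF t1(1)]], of \<sigma>]
    have "same_block \<sigma> (reflect n \<sigma> (b 1)) (a t)"
      using r U[OF t1(1)] U[OF t1(2)] same_block_common same_block_trans by blast
    then show "a t \<le> reflect n \<sigma> (b 1)"
      using upper_opener_before_closer[OF conjunct1[OF r]] r U[OF t1(2)] U[OF t1(1)] by blast
  qed
  then show ?thesis by (rule is_pattern_image[OF reflect_right_inj card img])
qed

end

context OC_blocks begin

lemma lower_pattern_in_block:
  fixes c d :: "nat \<Rightarrow> nat" and t :: nat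
  assumes sub: "S \<subseteq> lower_arcs n \<sigma>" and S: "S = (\<lambda>i. (c i, d i)) ` {1..t}"
    and cc: "\<forall>i\<in>{1..<t}. c i < c (i+1)" and cd: "c t < d 1" and i: "i \<in> {1..t}"
  shows "c i \<in> {1..n} \<and> \<not> upper_closer \<sigma> (c i) \<and> lower_closer \<sigma> (d i) \<and>
         same_block \<sigma> (c 1) (c i) \<and> same_block \<sigma> (c 1) (d i)"
proof -
  have arc: "d j \<in> {1..n} \<and> c j = \<sigma> (d j) \<and> c j < d j" if "j \<in> {1..t}" for j
  proof -
    have "(c j, d j) \<in> lower_arcs n \<sigma>" using sub S that by blast
    then show ?thesis by (auto simp: lower_arcs_image)
  qed
  have t1: "1 \<in> {1..t}" using i by auto
  have "c 1 \<le> c i" "c i \<le> c t"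
    using chain_increasing[OF cc, of 1 i] chain_increasing[OF cc, of i t] i by auto
  then have first: "same_block \<sigma> (c 1) (c i)"
    using same_block_between[OF same_block_sym[OF same_block_arc]] arc[OF t1] cd
    by (metis less_imp_le_nat le_trans)
  then have "same_block \<sigma> (c 1) (d i)"
    using same_block_sym[OF same_block_arc] arc[OF i] same_block_trans by metis
  moreover have "\<not> upper_closer \<sigma> (c i)"
    using arc[OF i] permutes_inverses[OF perm] by (simp add: upper_closer_def)
  moreover have "c i \<in> {1..n}" using arc[OF i] permutes_in_image[OF perm] by metis
  ultimately show ?thesis using first arc[OF i] by (simp add: lower_closer_def)
qed

(* Reflection reverses the left ends of a lower pattern and keeps them before the right
   ends; re-indexing backwards exchanges lower crossings and lower nestings. *)
lemma lower_pattern_reflect: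
  fixes c d :: "nat \<Rightarrow> nat" and t :: nat
  assumes sub: "S \<subseteq> lower_arcs n \<sigma>" and S: "S = (\<lambda>i. (c i, d i)) ` {1..t}"
    and cc: "\<forall>i\<in>{1..<t}. c i < c (i+1)" and cd: "c t < d 1"
  shows "reflect_left n \<sigma> ` S = (\<lambda>i. (reflect n \<sigma> (c (t+1-i)), d (t+1-i))) ` {1..t}"
    and "\<And>i. i \<in> {1..<t} \<Longrightarrow> reflect n \<sigma> (c (t+1-i)) < reflect n \<sigma> (c (t+1-(i+1)))"
    and "\<And>i. i \<in> {1..t} \<Longrightarrow> reflect n \<sigma> (c 1) < d i"
proof -
  note L = lower_pattern_in_block[OF sub S cc cd]
  have "reflect_left n \<sigma> ` S = (\<lambda>j. (reflect n \<sigma> (c j), d j)) ` {1..t}"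
    unfolding S image_image by (simp add: reflect_left_def)
  also have "\<dots> = (\<lambda>j. (reflect n \<sigma> (c j), d j)) ` ((\<lambda>i. t + 1 - i) ` {1..t})"
    by (simp only: reverse_index_image)
  finally show "reflect_left n \<sigma> ` S = (\<lambda>i. (reflect n \<sigma> (c (t+1-i)), d (t+1-i))) ` {1..t}"
    by (simp only: image_image)
  show "reflect n \<sigma> (c (t+1-i)) < reflect n \<sigma> (c (t+1-(i+1)))" if i: "i \<in> {1..<t}" for i
  proof -
    define j where "j = t - i"
    have j: "j \<in> {1..t}" "j+1 \<in> {1..t}" "t + 1 - i = j + 1" "t + 1 - (i+1) = j" "c j < c (j+1)"
      using i cc unfolding j_def by auto
    show ?thesis unfolding j(3,4)
      using reflect_antimono L[OF j(1)] L[OF j(2)] same_block_common j(5) by blast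
  qed
  show "reflect n \<sigma> (c 1) < d i" if i: "i \<in> {1..t}" for i
  proof -
    have t1: "1 \<in> {1..t}" using i by auto
    note r = reflect_in_class[OF conjunct1[OF L[OF t1]], of \<sigma>]
    have "same_block \<sigma> (reflect n \<sigma> (c 1)) (d i)"
      using r L[OF i] same_block_common by blast
    moreover have "lower_opener \<sigma> (reflect n \<sigma> (c 1))" using r L[OF t1] lower_opener_iff by blast
    ultimately show ?thesis using lower_opener_before_closer[OF conjunct1[OF r]] L[OF i] by blast
  qed
qed

lemma lower_crossing_to_nesting:
  assumes sub: "S \<subseteq> lower_arcs n \<sigma>" and t: "t \<ge> 1" and pat: "is_pattern (low_cross_shape t) t S"
  shows "is_pattern (low_nest_shape t) t (reflect_left n \<sigma> ` S)"
proof -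
  obtain c d where S: "S = (\<lambda>i. (c i, d i)) ` {1..t}" and sh: "low_cross_shape t c d"
    and card: "card S = t" using pat by (auto simp: is_pattern_def)
  have cc: "\<forall>i\<in>{1..<t}. c i < c (i+1)" and dd: "\<forall>i\<in>{1..<t}. d i < d (i+1)"
    and cd: "c t < d 1" using sh by (auto simp: low_cross_shape_def)
  note R = lower_pattern_reflect[OF sub S cc cd]
  have "low_nest_shape t (\<lambda>i. reflect n \<sigma> (c (t+1-i))) (\<lambda>i. d (t+1-i))"
    unfolding low_nest_shape_def
  proof (intro conjI ballI)
    fix i assume i: "i \<in> {1..<t}"
    show "reflect n \<sigma> (c (t+1-i)) < reflect n \<sigma> (c (t+1-(i+1)))" using R(2)[OF i] .
    have "t - i \<in> {1..<t}" "t + 1 - i = (t - i) + 1" "t + 1 - (i+1) = t - i" using i by auto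
    then show "d (t+1-(i+1)) < d (t+1-i)" using dd by simp
  qed (use R(3)[of 1] t in simp)
  then show ?thesis by (rule is_pattern_image[OF reflect_left_inj card R(1)])
qed

lemma lower_nesting_to_crossing:
  assumes sub: "S \<subseteq> lower_arcs n \<sigma>" and t: "t \<ge> 1" and pat: "is_pattern (low_nest_shape t) t S"
  shows "is_pattern (low_cross_shape t) t (reflect_left n \<sigma> ` S)"
proof -
  obtain c d where S: "S = (\<lambda>i. (c i, d i)) ` {1..t}" and sh: "low_nest_shape t c d"
    and card: "card S = t" using pat by (auto simp: is_pattern_def)
  have cc: "\<forall>i\<in>{1..<t}. c i < c (i+1)" and dd: "\<forall>i\<in>{1..<t}. d (i+1) < d i"
    and cd: "c t < d t" using sh by (auto simp: low_nest_shape_def)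
  have "c t < d 1" using cd chain_decreasing[OF dd, of 1 t] t by simp
  note R = lower_pattern_reflect[OF sub S cc this]
  have "low_cross_shape t (\<lambda>i. reflect n \<sigma> (c (t+1-i))) (\<lambda>i. d (t+1-i))"
    unfolding low_cross_shape_def
  proof (intro conjI ballI)
    fix i assume i: "i \<in> {1..<t}"
    show "reflect n \<sigma> (c (t+1-i)) < reflect n \<sigma> (c (t+1-(i+1)))" using R(2)[OF i] .
    have "t - i \<in> {1..<t}" "t + 1 - i = (t - i) + 1" "t + 1 - (i+1) = t - i" using i by auto
    then show "d (t+1-i) < d (t+1-(i+1))" using dd by simp
  qed (use R(3)[of t] t in simp)
  then show ?thesis by (rule is_pattern_image[OF reflect_left_inj card R(1)])
qed

end

context OC_blocks begin

(* Reflecting right ends is a bijection from the upper t-crossings of sigma onto the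
   upper t-nestings of phi(sigma); its inverse is the same map, seen from phi(sigma). *)
lemma nu_flip:
  assumes t: "t \<ge> 1" shows "nu n t (flip n \<sigma>) = cu n t \<sigma>"
proof -
  interpret F: OC_blocks n "flip n \<sigma>" r s by (rule OC_blocks_flip)
  have pull_back: "reflect_right n \<sigma> ` T \<subseteq> upper_arcs n \<sigma>" if "T \<subseteq> upper_arcs n (flip n \<sigma>)" for T
    using image_mono[OF that[unfolded upper_arcs_flip], of "reflect_right n \<sigma>"]
    by (simp add: image_image reflect_right_involution)
  have "card {S. S \<subseteq> upper_arcs n \<sigma> \<and> is_pattern (up_cross_shape t) t S}
      = card {T. T \<subseteq> upper_arcs n (flip n \<sigma>) \<and> is_pattern (up_nest_shape t) t T}"
  proof (rule card_eq_by_involution[where f = "image (reflect_right n \<sigma>)"])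
    show "reflect_right n \<sigma> ` reflect_right n \<sigma> ` S = S" for S
      by (simp add: image_image reflect_right_involution)
    show "image (reflect_right n \<sigma>) ` {S. S \<subseteq> upper_arcs n \<sigma> \<and> is_pattern (up_cross_shape t) t S}
      \<subseteq> {T. T \<subseteq> upper_arcs n (flip n \<sigma>) \<and> is_pattern (up_nest_shape t) t T}"
      using upper_crossing_to_nesting[OF _ t] by (auto simp: upper_arcs_flip)
    show "image (reflect_right n \<sigma>) ` {T. T \<subseteq> upper_arcs n (flip n \<sigma>) \<and> is_pattern (up_nest_shape t) t T}
      \<subseteq> {S. S \<subseteq> upper_arcs n \<sigma> \<and> is_pattern (up_cross_shape t) t S}"
      using F.upper_nesting_to_crossing[OF _ t] pull_back
      by (auto simp: reflect_right_def reflect_flip)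
  qed
  then show ?thesis by (simp add: nu_def cu_def)
qed

lemma nl_flip:
  assumes t: "t \<ge> 1" shows "nl n t (flip n \<sigma>) = cl n t \<sigma>"
proof -
  interpret F: OC_blocks n "flip n \<sigma>" r s by (rule OC_blocks_flip)
  have pull_back: "reflect_left n \<sigma> ` T \<subseteq> lower_arcs n \<sigma>" if "T \<subseteq> lower_arcs n (flip n \<sigma>)" for T
    using image_mono[OF that[unfolded lower_arcs_flip], of "reflect_left n \<sigma>"]
    by (simp add: image_image reflect_left_involution)
  have "card {S. S \<subseteq> lower_arcs n \<sigma> \<and> is_pattern (low_cross_shape t) t S}
      = card {T. T \<subseteq> lower_arcs n (flip n \<sigma>) \<and> is_pattern (low_nest_shape t) t T}"
  proof (rule card_eq_by_involution[where f = "image (reflect_left n \<sigma>)"])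
    show "reflect_left n \<sigma> ` reflect_left n \<sigma> ` S = S" for S
      by (simp add: image_image reflect_left_involution)
    show "image (reflect_left n \<sigma>) ` {S. S \<subseteq> lower_arcs n \<sigma> \<and> is_pattern (low_cross_shape t) t S}
      \<subseteq> {T. T \<subseteq> lower_arcs n (flip n \<sigma>) \<and> is_pattern (low_nest_shape t) t T}"
      using lower_crossing_to_nesting[OF _ t] by (auto simp: lower_arcs_flip)
    show "image (reflect_left n \<sigma>) ` {T. T \<subseteq> lower_arcs n (flip n \<sigma>) \<and> is_pattern (low_nest_shape t) t T}
      \<subseteq> {S. S \<subseteq> lower_arcs n \<sigma> \<and> is_pattern (low_cross_shape t) t S}"
      using F.lower_nesting_to_crossing[OF _ t] pull_back
      by (auto simp: reflect_left_def reflect_flip)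
  qed
  then show ?thesis by (simp add: nl_def cl_def)
qed

end

lemma flip_involution:
  assumes "\<sigma> permutes {1..n}" "typeOC n \<sigma>"
  shows "flip n \<sigma> permutes {1..n} \<and> typeOC n (flip n \<sigma>) \<and> flip n (flip n \<sigma>) = \<sigma>"
proof -
  obtain r s where "OC_blocks n \<sigma> r s" using typeOC_imp_OC_blocks assms by blast
  then interpret OC_blocks n \<sigma> r s .
  show ?thesis using flip_permutes OC_blocks_imp_typeOC[OF OC_blocks_flip] flip_flip by blast
qed

lemma flip_exchanges_statistics:
  assumes "\<sigma> permutes {1..n}" "typeOC n \<sigma>" "t \<ge> 1"
  shows "nu n t (flip n \<sigma>) = cu n t \<sigma> \<and> cu n t (flip n \<sigma>) = nu n t \<sigma> \<and>
         nl n t (flip n \<sigma>) = cl n t \<sigma> \<and> cl n t (flip n \<sigma>) = nl n t \<sigma>"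
proof -
  obtain r s where "OC_blocks n \<sigma> r s" using typeOC_imp_OC_blocks assms by blast
  then interpret OC_blocks n \<sigma> r s .
  interpret F: OC_blocks n "flip n \<sigma>" r s by (rule OC_blocks_flip)
  show ?thesis
    using nu_flip[OF assms(3)] nl_flip[OF assms(3)]
      F.nu_flip[OF assms(3)] F.nl_flip[OF assms(3)] flip_flip by simp
qed

theorem mainTheorem4:
  fixes n :: nat and \<alpha> \<beta> \<gamma> \<delta> :: "nat \<Rightarrow> nat"
  assumes "n \<ge> 1"
  shows "card {\<sigma>. \<sigma> permutes {1..n} \<and> typeOC n \<sigma> \<and>
            (\<forall>t\<ge>2. nu n t \<sigma> = \<alpha> t \<and> cu n t \<sigma> = \<beta> t \<and> nl n t \<sigma> = \<gamma> t \<and> cl n t \<sigma> = \<delta> t)}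
       = card {\<sigma>. \<sigma> permutes {1..n} \<and> typeOC n \<sigma> \<and>
            (\<forall>t\<ge>2. nu n t \<sigma> = \<beta> t \<and> cu n t \<sigma> = \<alpha> t \<and> nl n t \<sigma> = \<delta> t \<and> cl n t \<sigma> = \<gamma> t)}"
  (is "card ?A = card ?B")
proof (rule card_eq_by_involution[where f = "flip n"])
  show "flip n (flip n \<sigma>) = \<sigma>" if "\<sigma> \<in> ?A \<union> ?B" for \<sigma>
    using that flip_involution by blast
  have swap: "nu n t (flip n \<sigma>) = cu n t \<sigma> \<and> cu n t (flip n \<sigma>) = nu n t \<sigma> \<and>
      nl n t (flip n \<sigma>) = cl n t \<sigma> \<and> cl n t (flip n \<sigma>) = nl n t \<sigma>"
    if "\<sigma> permutes {1..n}" "typeOC n \<sigma>" "t \<ge> 2" for \<sigma> t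
    using flip_exchanges_statistics that by simp
  show "flip n ` ?A \<subseteq> ?B" and "flip n ` ?B \<subseteq> ?A"
    using flip_involution swap by auto
qed

end
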